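(* Let $X\in\mathbb{R}^{n\times p}$ have columns of Euclidean norm $\sqrt n$, let $\sigma^*>0$ and let $E\in\mathbb{R}^{n\times q}$ have i.i.d. $\mathcal N(0,{\sigma^*}^2)$ entries. Let $A>\sqrt2$ and $\lambda=\frac{2\sqrt2}{\sqrt{nq}}\big(1+A\sqrt{(\log p)/q}\big)$, and let $$\mathcal A_1=\Big\{\frac{\|X^\top E\|_{2,\infty}}{\sqrt{nq}\|E\|_F}\le\frac\lambda2\Big\}\cap\Big\{\frac{\sigma^*}{\sqrt2}<\frac{\|E\|_F}{\sqrt{nq}}<2\sigma^*\Big\}.$$ Then $\mathbb P(\mathcal A_1)\ge1-p^{1-A^2/2}-(1+e^2)e^{-nq/24}$.
   Context: $\|M\|_{2,\infty}$ is the maximum of the Euclidean norms of the rows of $M$; $\|\cdot\|_F$ is the Frobenius norm. *)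

theory Defs
  imports "HOL-Probability.Probability"
begin

definition gauss_matrix :: "nat \<Rightarrow> nat \<Rightarrow> real \<Rightarrow> (nat \<times> nat \<Rightarrow> real) measure" where
  "gauss_matrix n q \<sigma> = PiM ({..<n} \<times> {..<q}) (\<lambda>_. density lborel (normal_density 0 \<sigma>))"

definition fro_norm :: "nat \<Rightarrow> nat \<Rightarrow> (nat \<times> nat \<Rightarrow> real) \<Rightarrow> real" where
  "fro_norm n q E = sqrt (\<Sum>i<n. \<Sum>k<q. (E (i,k))\<^sup>2)"

definition XtE :: "nat \<Rightarrow> (nat \<Rightarrow> nat \<Rightarrow> real) \<Rightarrow> (nat \<times> nat \<Rightarrow> real) \<Rightarrow> nat \<Rightarrow> nat \<Rightarrow> real" where
  "XtE n X E j k = (\<Sum>i<n. X i j * E (i,k))"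

definition norm_2inf :: "nat \<Rightarrow> nat \<Rightarrow> (nat \<Rightarrow> nat \<Rightarrow> real) \<Rightarrow> real" where
  "norm_2inf m q M = Max ((\<lambda>j. sqrt (\<Sum>k<q. (M j k)\<^sup>2)) ` {..<m})"

end

theory Submission
  imports Defs
begin

(*
  Let F be the Frobenius norm of E and R_j the norm of the j-th row of X^T E, i.e. of x_j^T E for
  the j-th column x_j of X. Then F^2 is sigma^2 times a chi-square variable with nq degrees of
  freedom and, since |x_j|^2 = n, R_j^2 is n sigma^2 times a chi-square variable with q degrees of
  freedom; both are established through their moment generating functions. Chernoff bounds give
  P(F^2 <= nq sigma^2/2) and P(F^2 >= 4 nq sigma^2) at most exp(-nq/24), and
  P(R_j >= sigma sqrt n (sqrt q + t)) <= exp(-t^2/2). Outside these p + 2 events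
  |X^T E|_{2,inf} / (sqrt(nq) F) <= sqrt 2 (1 + t/sqrt q) / sqrt(nq) = lam/2 for
  t = A sqrt(log p), and the union bound gives the claim (even with 2 in place of 1 + e^2).
*)

abbreviation iid_normal :: "'i set \<Rightarrow> real \<Rightarrow> ('i \<Rightarrow> real) measure" where
  "iid_normal I s \<equiv> PiM I (\<lambda>_. density lborel (normal_density 0 s))"

lemma nn_integral_normal_density_by_completing_square:
  assumes "s' > 0" "c \<ge> 0" "g \<in> borel_measurable borel"
    and square: "\<And>z. normal_density 0 s z * g z = c * normal_density m s' z"
  shows "(\<integral>\<^sup>+z. ennreal (g z) \<partial>density lborel (normal_density 0 s)) = ennreal c"
proof -
  interpret prob_space "density lborel (normal_density m s')"
    using \<open>s' > 0\<close> by (rule prob_space_normal_density)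
  have "(\<integral>\<^sup>+z. ennreal (g z) \<partial>density lborel (normal_density 0 s))
      = (\<integral>\<^sup>+z. ennreal c * ennreal (normal_density m s' z) \<partial>lborel)"
    using assms(3) by (simp add: nn_integral_density ennreal_mult \<open>c \<ge> 0\<close> flip: ennreal_mult' square)
  also have "\<dots> = ennreal c * emeasure (density lborel (normal_density m s')) UNIV"
    by (simp add: nn_integral_cmult emeasure_density)
  finally show ?thesis
    using emeasure_space_1 by simp
qed

lemma nn_integral_normal_exp_linear:
  assumes "s > 0"
  shows "(\<integral>\<^sup>+z. ennreal (exp (w * z)) \<partial>density lborel (normal_density 0 s)) = ennreal (exp (w\<^sup>2 * s\<^sup>2 / 2))"
proof (rule nn_integral_normal_density_by_completing_square)
  fix z
  have "- z\<^sup>2 / (2 * s\<^sup>2) + w * z = w\<^sup>2 * s\<^sup>2 / 2 - (z - w * s\<^sup>2)\<^sup>2 / (2 * s\<^sup>2)"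
    using assms by (simp add: field_simps power2_eq_square)
  then have "exp (- (z - 0)\<^sup>2 / (2 * s\<^sup>2)) * exp (w * z)
      = exp (w\<^sup>2 * s\<^sup>2 / 2) * exp (- (z - w * s\<^sup>2)\<^sup>2 / (2 * s\<^sup>2))"
    by (simp flip: exp_add)
  then show "normal_density 0 s z * exp (w * z) = exp (w\<^sup>2 * s\<^sup>2 / 2) * normal_density (w * s\<^sup>2) s z"
    unfolding normal_density_def by (simp add: ac_simps)
qed (use assms in auto)

lemma nn_integral_normal_exp_square:
  assumes "s > 0" and "2 * a * s\<^sup>2 < 1"
  shows "(\<integral>\<^sup>+z. ennreal (exp (a * z\<^sup>2)) \<partial>density lborel (normal_density 0 s))
       = ennreal (1 / sqrt (1 - 2 * a * s\<^sup>2))"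
proof (rule nn_integral_normal_density_by_completing_square)
  define r where "r = sqrt (1 - 2 * a * s\<^sup>2)"
  have r: "r > 0" "r\<^sup>2 = 1 - 2 * a * s\<^sup>2"
    using assms(2) by (auto simp: r_def)
  show "s / r > 0"
    using assms(1) r by simp
  fix z
  have "- (z - 0)\<^sup>2 / (2 * s\<^sup>2) + a * z\<^sup>2 = - z\<^sup>2 * r\<^sup>2 / (2 * s\<^sup>2)"
    using assms(1) by (simp add: r(2) field_simps)
  also have "\<dots> = - (z - 0)\<^sup>2 / (2 * (s / r)\<^sup>2)"
    using r(1) by (simp add: power_divide)
  finally have "exp (- (z - 0)\<^sup>2 / (2 * s\<^sup>2)) * exp (a * z\<^sup>2) = exp (- (z - 0)\<^sup>2 / (2 * (s / r)\<^sup>2))"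
    by (simp flip: exp_add)
  moreover have "sqrt (2 * pi * (s / r)\<^sup>2) = sqrt (2 * pi * s\<^sup>2) / r"
    using assms(1) r(1) by (simp add: real_sqrt_mult real_sqrt_divide power_divide)
  ultimately show "normal_density 0 s z * exp (a * z\<^sup>2) = 1 / sqrt (1 - 2 * a * s\<^sup>2) * normal_density 0 (s / r) z"
    unfolding normal_density_def using r by (simp add: r_def)
qed (use assms in auto)

lemma prob_space_iid_normal: "s > 0 \<Longrightarrow> prob_space (iid_normal I s)"
  by (intro prob_space_PiM prob_space_normal_density)

lemma nn_integral_iid_normal_prod:
  assumes "s > 0" "finite I" "\<And>i. i \<in> I \<Longrightarrow> f i \<in> borel_measurable borel"
    and "\<And>i z. i \<in> I \<Longrightarrow> 0 \<le> f i z"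
  shows "(\<integral>\<^sup>+x. ennreal (\<Prod>i\<in>I. f i (x i)) \<partial>iid_normal I s)
       = (\<Prod>i\<in>I. \<integral>\<^sup>+z. ennreal (f i z) \<partial>density lborel (normal_density 0 s))"
proof -
  interpret product_sigma_finite "\<lambda>_. density lborel (normal_density 0 s)"
    using assms(1) by (simp add: product_sigma_finite_def prob_space_imp_sigma_finite prob_space_normal_density)
  have "(\<integral>\<^sup>+x. ennreal (\<Prod>i\<in>I. f i (x i)) \<partial>iid_normal I s)
      = (\<integral>\<^sup>+x. (\<Prod>i\<in>I. ennreal (f i (x i))) \<partial>iid_normal I s)"
    using assms(4) by (simp add: prod_ennreal)
  also have "\<dots> = (\<Prod>i\<in>I. \<integral>\<^sup>+z. ennreal (f i z) \<partial>density lborel (normal_density 0 s))"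
    using assms(2,3) by (intro product_nn_integral_prod) auto
  finally show ?thesis .
qed

lemma nn_integral_iid_normal_exp_linear:
  assumes "s > 0" "finite I"
  shows "(\<integral>\<^sup>+x. ennreal (exp (\<Sum>i\<in>I. w i * x i)) \<partial>iid_normal I s)
       = ennreal (exp (s\<^sup>2 / 2 * (\<Sum>i\<in>I. (w i)\<^sup>2)))"
proof -
  have "(\<integral>\<^sup>+x. ennreal (exp (\<Sum>i\<in>I. w i * x i)) \<partial>iid_normal I s)
      = (\<Prod>i\<in>I. \<integral>\<^sup>+z. ennreal (exp (w i * z)) \<partial>density lborel (normal_density 0 s))"
    using assms nn_integral_iid_normal_prod[where f = "\<lambda>i z. exp (w i * z)"] by (simp add: exp_sum)
  also have "\<dots> = (\<Prod>i\<in>I. ennreal (exp ((w i)\<^sup>2 * s\<^sup>2 / 2)))"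
    using assms(1) by (simp add: nn_integral_normal_exp_linear)
  also have "\<dots> = ennreal (exp (\<Sum>i\<in>I. s\<^sup>2 / 2 * (w i)\<^sup>2))"
    using assms(2) by (simp add: prod_ennreal exp_sum mult.commute)
  finally show ?thesis
    by (simp add: sum_distrib_left)
qed

lemma nn_integral_iid_normal_exp_sum_sq:
  assumes "s > 0" "finite I" "2 * a * s\<^sup>2 < 1"
  shows "(\<integral>\<^sup>+x. ennreal (exp (a * (\<Sum>i\<in>I. (x i)\<^sup>2))) \<partial>iid_normal I s)
       = ennreal ((1 / sqrt (1 - 2 * a * s\<^sup>2)) ^ card I)"
proof -
  have "(\<integral>\<^sup>+x. ennreal (exp (a * (\<Sum>i\<in>I. (x i)\<^sup>2))) \<partial>iid_normal I s)
      = (\<Prod>i\<in>I. \<integral>\<^sup>+z. ennreal (exp (a * z\<^sup>2)) \<partial>density lborel (normal_density 0 s))"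
    using assms nn_integral_iid_normal_prod[where f = "\<lambda>i z. exp (a * z\<^sup>2)"]
    by (simp add: sum_distrib_left exp_sum)
  also have "\<dots> = (\<Prod>i\<in>I. ennreal (1 / sqrt (1 - 2 * a * s\<^sup>2)))"
    using assms by (simp add: nn_integral_normal_exp_square)
  finally show ?thesis
    using assms(3) by (simp add: ennreal_power)
qed

lemma one_plus_div_sqrt_pow_le_exp:
  fixes k :: nat and t :: real
  assumes "k \<ge> 1" "t \<ge> 0"
  shows "(1 + t / sqrt k) ^ k \<le> exp (t * sqrt k)"
proof -
  have "sqrt k > 0"
    using assms(1) by simp
  have "(1 + t / sqrt k) ^ k \<le> exp (t / sqrt k) ^ k"
    using assms \<open>sqrt k > 0\<close> by (intro power_mono exp_ge_add_one_self) auto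
  also have "\<dots> = exp (real k * (t / sqrt k))"
    by (simp flip: exp_of_nat_mult)
  also have "real k * (t / sqrt k) = t * sqrt k"
    using \<open>sqrt k > 0\<close> real_sqrt_mult_self[of k] by (simp add: field_simps)
  finally show ?thesis .
qed

lemma emeasure_ge_le_exp_nn_integral:
  assumes "a > 0" "Y \<in> borel_measurable M"
  shows "emeasure M {x \<in> space M. b \<le> Y x} \<le> ennreal (exp (- a * b)) * (\<integral>\<^sup>+x. ennreal (exp (a * Y x)) \<partial>M)"
proof -
  have "(\<integral>\<^sup>+x. ennreal (exp (a * Y x)) * indicator (space M) x \<partial>M) = (\<integral>\<^sup>+x. ennreal (exp (a * Y x)) \<partial>M)"
    by (intro nn_integral_cong) simp
  then show ?thesis
    using Chernoff_ineq_nn_integral_ge[of a "space M" M Y b] assms by simp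
qed

lemma chi_square_upper_tail:
  fixes Y :: "'a \<Rightarrow> real" and k :: nat
  assumes [measurable]: "Y \<in> borel_measurable M" and v: "v > 0" and k: "k \<ge> 1" and t: "t \<ge> 0"
    and mgf: "\<And>a. 0 \<le> a \<Longrightarrow> 2 * a * v < 1 \<Longrightarrow>
      (\<integral>\<^sup>+x. ennreal (exp (a * Y x)) \<partial>M) = ennreal ((1 / sqrt (1 - 2 * a * v)) ^ k)"
  shows "emeasure M {x \<in> space M. v * (sqrt k + t)\<^sup>2 \<le> Y x} \<le> ennreal (exp (- t\<^sup>2 / 2))"
proof (cases "t = 0")
  \<comment> \<open>The Chernoff parameter chosen below vanishes for t = 0, where the bound is trivial.\<close>
  case True
  have "emeasure M (space M) = 1"
    using mgf[of 0] v by simp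
  then show ?thesis
    using True emeasure_mono[of "{x \<in> space M. v * (sqrt k + t)\<^sup>2 \<le> Y x}" "space M" M] by simp
next
  case False
  define T where "T = (sqrt k + t)\<^sup>2"
  have "sqrt k > 0"
    using k by simp
  have "(sqrt k)\<^sup>2 < T"
    unfolding T_def using False t by (intro power_strict_mono) auto
  then have "k < T"
    by simp
  \<comment> \<open>The minimiser of exp (- a v T) (1 - 2 a v) powr (- k / 2).\<close>
  define a where "a = (1 - k / T) / (2 * v)"
  have a: "a > 0" "1 - 2 * a * v = k / T"
    using \<open>k < T\<close> k v by (auto simp: a_def field_simps)
  moreover have "k / T > 0"
    using \<open>k < T\<close> k by simp
  ultimately have "2 * a * v < 1"
    by linarith
  have exponent: "a * (v * T) = t * sqrt k + t\<^sup>2 / 2"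
  proof -
    have "a * (v * T) = (T - k) / 2"
      using v \<open>k < T\<close> by (simp add: a_def field_simps)
    then show ?thesis
      unfolding T_def by (simp add: power2_eq_square algebra_simps)
  qed
  have "emeasure M {x \<in> space M. v * T \<le> Y x} \<le> ennreal (exp (- a * (v * T))) * (\<integral>\<^sup>+x. ennreal (exp (a * Y x)) \<partial>M)"
    using a(1) by (rule emeasure_ge_le_exp_nn_integral) simp
  also have "\<dots> = ennreal (exp (- (t * sqrt k + t\<^sup>2 / 2)) * (1 + t / sqrt k) ^ k)"
    using mgf[of a] a \<open>2 * a * v < 1\<close> \<open>sqrt k > 0\<close> t exponent
    by (simp add: T_def real_sqrt_divide add_divide_distrib ennreal_mult')
  also have "\<dots> \<le> ennreal (exp (- (t * sqrt k + t\<^sup>2 / 2)) * exp (t * sqrt k))"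
    using one_plus_div_sqrt_pow_le_exp[OF k t] by (intro ennreal_leI mult_left_mono) auto
  finally show ?thesis
    by (simp add: T_def flip: exp_add)
qed

lemma chi_square_upper_tail_four_mean:
  fixes Y :: "'a \<Rightarrow> real" and k :: nat and v :: real
  assumes "Y \<in> borel_measurable M" "v > 0" "k \<ge> 1"
    and "\<And>a. 0 \<le> a \<Longrightarrow> 2 * a * v < 1 \<Longrightarrow>
      (\<integral>\<^sup>+x. ennreal (exp (a * Y x)) \<partial>M) = ennreal ((1 / sqrt (1 - 2 * a * v)) ^ k)"
  shows "emeasure M {x \<in> space M. 4 * real k * v \<le> Y x} \<le> ennreal (exp (- real k / 24))"
proof -
  have "v * (sqrt k + sqrt k)\<^sup>2 = 4 * real k * v"
    by (simp add: power2_eq_square algebra_simps)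
  then have "emeasure M {x \<in> space M. 4 * real k * v \<le> Y x} \<le> ennreal (exp (- (sqrt k)\<^sup>2 / 2))"
    using chi_square_upper_tail[OF assms(1-3) _ assms(4), of "sqrt k"] by (simp add: mult_ac)
  also have "\<dots> \<le> ennreal (exp (- real k / 24))"
    by (intro ennreal_leI) simp
  finally show ?thesis .
qed

lemma exp_quarter_le_sqrt_2_mult_exp: "exp (1 / 4) \<le> sqrt 2 * exp (- 1 / 24 :: real)"
proof -
  have "1 + (- 7 / 24) \<le> exp (- 7 / 24 :: real)"
    by (rule exp_ge_add_one_self)
  then have "exp (7 / 24 :: real) \<le> 24 / 17"
    by (simp add: exp_minus field_simps)
  also have "(24 / 17 :: real) \<le> sqrt 2"
    by (rule real_le_rsqrt) (simp add: power2_eq_square)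
  finally have "exp (7 / 24) * exp (- 1 / 24) \<le> sqrt 2 * exp (- 1 / 24 :: real)"
    by simp
  then show ?thesis
    by (simp flip: exp_add)
qed

lemma chi_square_lower_tail_half_mean:
  fixes Y :: "'a \<Rightarrow> real" and k :: nat and v :: real
  assumes [measurable]: "Y \<in> borel_measurable M" and v: "v > 0"
    and mgf: "\<And>a. a \<le> 0 \<Longrightarrow>
      (\<integral>\<^sup>+x. ennreal (exp (a * Y x)) \<partial>M) = ennreal ((1 / sqrt (1 - 2 * a * v)) ^ k)"
  shows "emeasure M {x \<in> space M. Y x \<le> real k * v / 2} \<le> ennreal (exp (- real k / 24))"
proof -
  define s where "s = 1 / (2 * v)"
  have "s > 0" "s * (k * v / 2) = k / 4" "1 + 2 * s * v = 2"
    using v by (simp_all add: s_def)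
  have "emeasure M {x \<in> space M. Y x \<le> real k * v / 2}
      \<le> ennreal (exp (s * (k * v / 2))) * (\<integral>\<^sup>+x. ennreal (exp (- s * Y x)) \<partial>M)"
    using emeasure_ge_le_exp_nn_integral[of s "\<lambda>x. - Y x" M "- (k * v / 2)"] \<open>s > 0\<close> by simp
  also have "\<dots> = ennreal (exp (s * (k * v / 2))) * ennreal ((1 / sqrt 2) ^ k)"
    using mgf[of "- s"] \<open>s > 0\<close> \<open>1 + 2 * s * v = 2\<close> by simp
  also have "\<dots> = ennreal ((exp (1 / 4) / sqrt 2) ^ k)"
  proof -
    have "exp (s * (k * v / 2)) = exp (1 / 4) ^ k"
      unfolding \<open>s * (k * v / 2) = k / 4\<close> by (simp flip: exp_of_nat_mult)
    then show ?thesis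
      by (simp add: power_divide flip: ennreal_mult')
  qed
  also have "\<dots> \<le> ennreal (exp (- 1 / 24) ^ k)"
    using exp_quarter_le_sqrt_2_mult_exp by (intro ennreal_leI power_mono) (auto simp: field_simps)
  finally show ?thesis
    by (simp flip: exp_of_nat_mult)
qed

lemma fro_norm_sq: "(fro_norm n q E)\<^sup>2 = (\<Sum>ik\<in>{..<n} \<times> {..<q}. (E ik)\<^sup>2)"
  unfolding fro_norm_def by (simp add: sum.cartesian_product sum_nonneg)

lemma nn_integral_gauss_matrix_exp_fro_norm_sq:
  assumes "s > 0" "2 * a * s\<^sup>2 < 1"
  shows "(\<integral>\<^sup>+E. ennreal (exp (a * (fro_norm n q E)\<^sup>2)) \<partial>gauss_matrix n q s)
       = ennreal ((1 / sqrt (1 - 2 * a * s\<^sup>2)) ^ (n * q))"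
  using nn_integral_iid_normal_exp_sum_sq[OF assms(1) _ assms(2), of "{..<n} \<times> {..<q}"]
  by (simp add: gauss_matrix_def fro_norm_sq card_cartesian_product)

lemma nn_integral_gauss_matrix_exp_row_sq:
  fixes x :: "nat \<Rightarrow> real"
  assumes s: "s > 0" and "\<mu> \<ge> 0" and r: "(\<Sum>i<n. (x i)\<^sup>2) = r" and "2 * (\<mu> * r) * s\<^sup>2 < 1"
  shows "(\<integral>\<^sup>+E. ennreal (exp (\<mu> * (\<Sum>k<q. (\<Sum>i<n. x i * E (i, k))\<^sup>2))) \<partial>gauss_matrix n q s)
       = ennreal ((1 / sqrt (1 - 2 * (\<mu> * r) * s\<^sup>2)) ^ q)"
proof -
  define M where "M = gauss_matrix n q s"
  define Q where "Q = iid_normal {..<q} s"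
  define c where "c = sqrt (2 * \<mu>) / s"
  have c: "s\<^sup>2 / 2 * c\<^sup>2 = \<mu>"
    using s \<open>\<mu> \<ge> 0\<close> by (simp add: c_def power_divide)
  interpret pair_sigma_finite M Q
    unfolding M_def Q_def gauss_matrix_def
    using s by (simp add: pair_sigma_finite_def prob_space_iid_normal prob_space_imp_sigma_finite)
  \<comment> \<open>exp (\<mu> y^2) is the Gaussian moment generating function at c y: introducing an auxiliary
    Gaussian vector Z and exchanging the integrals, E only enters linearly and integrates out.\<close>
  have linearize: "ennreal (exp (\<mu> * (\<Sum>k<q. (\<Sum>i<n. x i * E (i, k))\<^sup>2)))
      = (\<integral>\<^sup>+Z. ennreal (exp (\<Sum>k<q. c * (\<Sum>i<n. x i * E (i, k)) * Z k)) \<partial>Q)" for E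
    using nn_integral_iid_normal_exp_linear[OF s, of "{..<q}" "\<lambda>k. c * (\<Sum>i<n. x i * E (i, k))"]
    by (simp add: Q_def power_mult_distrib mult.assoc flip: sum_distrib_left c)
  have inner: "(\<integral>\<^sup>+E. ennreal (exp (\<Sum>k<q. c * (\<Sum>i<n. x i * E (i, k)) * Z k)) \<partial>M)
      = ennreal (exp (\<mu> * r * (\<Sum>k<q. (Z k)\<^sup>2)))" for Z
  proof -
    have "(\<Sum>k<q. c * (\<Sum>i<n. x i * E (i, k)) * Z k)
        = (\<Sum>ik\<in>{..<n} \<times> {..<q}. c * x (fst ik) * Z (snd ik) * E ik)" for E
      unfolding sum.cartesian_product' by (subst sum.swap) (simp add: sum_distrib_left sum_distrib_right ac_simps)
    then have "(\<integral>\<^sup>+E. ennreal (exp (\<Sum>k<q. c * (\<Sum>i<n. x i * E (i, k)) * Z k)) \<partial>M)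
        = ennreal (exp (s\<^sup>2 / 2 * (\<Sum>ik\<in>{..<n} \<times> {..<q}. (c * x (fst ik) * Z (snd ik))\<^sup>2)))"
      using nn_integral_iid_normal_exp_linear[OF s, of "{..<n} \<times> {..<q}" "\<lambda>ik. c * x (fst ik) * Z (snd ik)"]
      by (simp add: M_def gauss_matrix_def)
    also have "(\<Sum>ik\<in>{..<n} \<times> {..<q}. (c * x (fst ik) * Z (snd ik))\<^sup>2) = c\<^sup>2 * (r * (\<Sum>k<q. (Z k)\<^sup>2))"
      unfolding sum.cartesian_product' sum_product r[symmetric]
      by (simp add: power_mult_distrib sum_distrib_left ac_simps)
    finally show ?thesis
      by (simp add: mult.assoc flip: c)
  qed
  have "(\<integral>\<^sup>+E. ennreal (exp (\<mu> * (\<Sum>k<q. (\<Sum>i<n. x i * E (i, k))\<^sup>2))) \<partial>M)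
      = (\<integral>\<^sup>+E. \<integral>\<^sup>+Z. ennreal (exp (\<Sum>k<q. c * (\<Sum>i<n. x i * E (i, k)) * Z k)) \<partial>Q \<partial>M)"
    by (simp only: linearize)
  also have "\<dots> = (\<integral>\<^sup>+Z. \<integral>\<^sup>+E. ennreal (exp (\<Sum>k<q. c * (\<Sum>i<n. x i * E (i, k)) * Z k)) \<partial>M \<partial>Q)"
    by (rule Fubini'[symmetric]) (simp add: M_def Q_def gauss_matrix_def)
  also have "\<dots> = (\<integral>\<^sup>+Z. ennreal (exp (\<mu> * r * (\<Sum>k<q. (Z k)\<^sup>2))) \<partial>Q)"
    by (simp only: inner)
  also have "\<dots> = ennreal ((1 / sqrt (1 - 2 * (\<mu> * r) * s\<^sup>2)) ^ q)"
    using nn_integral_iid_normal_exp_sum_sq[OF s, of "{..<q}" "\<mu> * r"] assms(4) by (simp add: Q_def)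
  finally show ?thesis
    unfolding M_def .
qed

lemma prob_space_gauss_matrix: "s > 0 \<Longrightarrow> prob_space (gauss_matrix n q s)"
  unfolding gauss_matrix_def by (rule prob_space_iid_normal)

lemma fro_norm_measurable [measurable]: "fro_norm n q \<in> borel_measurable (gauss_matrix n q s)"
  unfolding fro_norm_def[abs_def] gauss_matrix_def by measurable

lemma row_sq_norm_measurable [measurable]:
  "(\<lambda>E. \<Sum>k<q. (\<Sum>i<n. x i * E (i, k))\<^sup>2) \<in> borel_measurable (gauss_matrix n q s)"
  unfolding gauss_matrix_def by measurable

lemma fro_norm_nonneg: "fro_norm n q E \<ge> 0"
  by (simp add: fro_norm_def sum_nonneg)

lemma prob_fro_norm_small:
  assumes s: "s > 0" and "n \<ge> 1" "q \<ge> 1"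
  shows "measure (gauss_matrix n q s) {E \<in> space (gauss_matrix n q s). fro_norm n q E / sqrt (real n * real q) \<le> s / sqrt 2}
       \<le> exp (- (real n * real q) / 24)"
proof -
  let ?M = "gauss_matrix n q s"
  have "{E \<in> space ?M. fro_norm n q E / sqrt (real n * real q) \<le> s / sqrt 2}
      \<subseteq> {E \<in> space ?M. (fro_norm n q E)\<^sup>2 \<le> real (n * q) * s\<^sup>2 / 2}"
  proof safe
    fix E
    assume "fro_norm n q E / sqrt (real n * real q) \<le> s / sqrt 2"
    then have "(fro_norm n q E / sqrt (real n * real q))\<^sup>2 \<le> (s / sqrt 2)\<^sup>2"
      by (intro power_mono) (simp_all add: fro_norm_nonneg)
    then show "(fro_norm n q E)\<^sup>2 \<le> real (n * q) * s\<^sup>2 / 2"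
      using assms by (simp add: power_divide field_simps)
  qed
  then have "emeasure ?M {E \<in> space ?M. fro_norm n q E / sqrt (real n * real q) \<le> s / sqrt 2}
      \<le> emeasure ?M {E \<in> space ?M. (fro_norm n q E)\<^sup>2 \<le> real (n * q) * s\<^sup>2 / 2}"
    by (intro emeasure_mono) measurable
  also have "\<dots> \<le> ennreal (exp (- real (n * q) / 24))"
  proof (rule chi_square_lower_tail_half_mean)
    fix a :: real
    assume "a \<le> 0"
    then have "2 * a * s\<^sup>2 < 1"
      using mult_nonpos_nonneg[of "2 * a" "s\<^sup>2"] by simp
    then show "(\<integral>\<^sup>+E. ennreal (exp (a * (fro_norm n q E)\<^sup>2)) \<partial>?M) = ennreal ((1 / sqrt (1 - 2 * a * s\<^sup>2)) ^ (n * q))"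
      by (rule nn_integral_gauss_matrix_exp_fro_norm_sq[OF s])
  qed (use s in auto)
  finally show ?thesis
    unfolding measure_def by (intro enn2real_leI) simp_all
qed

lemma prob_fro_norm_large:
  assumes s: "s > 0" and "n \<ge> 1" "q \<ge> 1"
  shows "measure (gauss_matrix n q s) {E \<in> space (gauss_matrix n q s). 2 * s \<le> fro_norm n q E / sqrt (real n * real q)}
       \<le> exp (- (real n * real q) / 24)"
proof -
  let ?M = "gauss_matrix n q s"
  have "{E \<in> space ?M. 2 * s \<le> fro_norm n q E / sqrt (real n * real q)}
      \<subseteq> {E \<in> space ?M. 4 * real (n * q) * s\<^sup>2 \<le> (fro_norm n q E)\<^sup>2}"
  proof safe
    fix E
    assume "2 * s \<le> fro_norm n q E / sqrt (real n * real q)"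
    then have "(2 * s)\<^sup>2 \<le> (fro_norm n q E / sqrt (real n * real q))\<^sup>2"
      using s by (intro power_mono) simp_all
    then show "4 * real (n * q) * s\<^sup>2 \<le> (fro_norm n q E)\<^sup>2"
      using assms by (simp add: power_divide power_mult_distrib field_simps)
  qed
  then have "emeasure ?M {E \<in> space ?M. 2 * s \<le> fro_norm n q E / sqrt (real n * real q)}
      \<le> emeasure ?M {E \<in> space ?M. 4 * real (n * q) * s\<^sup>2 \<le> (fro_norm n q E)\<^sup>2}"
    by (intro emeasure_mono) measurable
  also have "\<dots> \<le> ennreal (exp (- real (n * q) / 24))"
    using assms by (intro chi_square_upper_tail_four_mean nn_integral_gauss_matrix_exp_fro_norm_sq) auto
  finally show ?thesis
    unfolding measure_def by (intro enn2real_leI) simp_all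
qed

lemma prob_row_norm_large:
  fixes x :: "nat \<Rightarrow> real"
  assumes s: "s > 0" and "q \<ge> 1" "t \<ge> 0" and r: "(\<Sum>i<n. (x i)\<^sup>2) = r" "r > 0"
  shows "measure (gauss_matrix n q s)
           {E \<in> space (gauss_matrix n q s). s * sqrt r * (sqrt q + t) \<le> sqrt (\<Sum>k<q. (\<Sum>i<n. x i * E (i, k))\<^sup>2)}
       \<le> exp (- t\<^sup>2 / 2)"
proof -
  let ?M = "gauss_matrix n q s"
  let ?Y = "\<lambda>E. \<Sum>k<q. (\<Sum>i<n. x i * E (i, k))\<^sup>2"
  have "{E \<in> space ?M. s * sqrt r * (sqrt q + t) \<le> sqrt (?Y E)}
      \<subseteq> {E \<in> space ?M. r * s\<^sup>2 * (sqrt q + t)\<^sup>2 \<le> ?Y E}"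
  proof safe
    fix E
    assume "s * sqrt r * (sqrt q + t) \<le> sqrt (?Y E)"
    then have "(s * sqrt r * (sqrt q + t))\<^sup>2 \<le> (sqrt (?Y E))\<^sup>2"
      using assms by (intro power_mono) simp_all
    then show "r * s\<^sup>2 * (sqrt q + t)\<^sup>2 \<le> ?Y E"
      using r by (simp add: power_mult_distrib sum_nonneg mult_ac)
  qed
  then have "emeasure ?M {E \<in> space ?M. s * sqrt r * (sqrt q + t) \<le> sqrt (?Y E)}
      \<le> emeasure ?M {E \<in> space ?M. r * s\<^sup>2 * (sqrt q + t)\<^sup>2 \<le> ?Y E}"
    by (intro emeasure_mono) measurable
  also have "\<dots> \<le> ennreal (exp (- t\<^sup>2 / 2))"
    using chi_square_upper_tail[of ?Y ?M "r * s\<^sup>2" q t] assms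
      nn_integral_gauss_matrix_exp_row_sq[OF s _ r(1), of _ q]
    by (simp add: gauss_matrix_def mult_ac)
  finally show ?thesis
    unfolding measure_def by (intro enn2real_leI) simp_all
qed

lemma norm_2inf_XtE_measurable [measurable]:
  "(\<lambda>E. norm_2inf p q (XtE n X E)) \<in> borel_measurable (gauss_matrix n q s)"
  unfolding norm_2inf_def XtE_def gauss_matrix_def by measurable

lemma norm_2inf_le:
  assumes "m \<ge> 1" "\<And>j. j < m \<Longrightarrow> sqrt (\<Sum>k<q. (M j k)\<^sup>2) \<le> K"
  shows "norm_2inf m q M \<le> K"
  unfolding norm_2inf_def using assms by (subst Max_le_iff) (auto simp: lessThan_empty_iff)

lemma norm_2inf_nonneg:
  assumes "m \<ge> 1"
  shows "norm_2inf m q M \<ge> 0"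
proof -
  have "sqrt (\<Sum>k<q. (M 0 k)\<^sup>2) \<le> norm_2inf m q M"
    unfolding norm_2inf_def using assms by (intro Max_ge) auto
  moreover have "sqrt (\<Sum>k<q. (M 0 k)\<^sup>2) \<ge> 0"
    by (simp add: sum_nonneg)
  ultimately show ?thesis
    by linarith
qed

lemma norm_2inf_ratio_le:
  fixes n q :: nat
  assumes "n \<ge> 1" "q \<ge> 1" "\<sigma> > 0" "0 \<le> N" "N \<le> \<sigma> * sqrt n * (sqrt q + t)"
    and F: "\<sigma> / sqrt 2 < F / sqrt (real n * real q)"
  shows "N / (sqrt (real n * real q) * F) \<le> sqrt 2 / sqrt (real n * real q) * (1 + t / sqrt q)"
proof -
  define c where "c = sqrt (real n * real q)"
  have "c > 0"
    using assms(1,2) by (simp add: c_def)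
  have "0 < \<sigma> * c / sqrt 2"
    using \<open>c > 0\<close> assms(3) by simp
  moreover have "\<sigma> * c / sqrt 2 < F"
    using F \<open>c > 0\<close> by (simp add: c_def field_simps)
  ultimately have "N / (c * F) \<le> N / (c * (\<sigma> * c / sqrt 2))"
    using \<open>c > 0\<close> assms(4) by (intro divide_left_mono mult_left_mono mult_pos_pos) auto
  also have "\<dots> \<le> \<sigma> * sqrt n * (sqrt q + t) / (c * (\<sigma> * c / sqrt 2))"
    using \<open>c > 0\<close> assms(3,5) by (intro divide_right_mono) simp_all
  also have "\<dots> = sqrt 2 / c * (1 + t / sqrt q)"
  proof -
    have "\<sigma> * a * (b + t) / (a * b * (\<sigma> * (a * b) / sqrt 2)) = sqrt 2 / (a * b) * (1 + t / b)"
      if "a > 0" "b > 0" for a b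
      using that assms(3) by (simp add: field_simps)
    then show ?thesis
      using assms(1,2) by (simp add: c_def real_sqrt_mult)
  qed
  finally show ?thesis
    unfolding c_def .
qed

lemma XtE_ratio_le:
  assumes "n \<ge> 1" "p \<ge> 1" "q \<ge> 1" "\<sigma> > 0"
    and F: "\<sigma> / sqrt 2 < fro_norm n q E / sqrt (real n * real q)"
    and rows: "\<And>j. j < p \<Longrightarrow> sqrt (\<Sum>k<q. (\<Sum>i<n. X i j * E (i, k))\<^sup>2) < \<sigma> * sqrt n * (sqrt q + t)"
  shows "norm_2inf p q (XtE n X E) / (sqrt (real n * real q) * fro_norm n q E)
       \<le> sqrt 2 / sqrt (real n * real q) * (1 + t / sqrt q)"
proof (rule norm_2inf_ratio_le[OF assms(1,3,4) norm_2inf_nonneg[OF assms(2)] _ F])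
  show "norm_2inf p q (XtE n X E) \<le> \<sigma> * sqrt n * (sqrt q + t)"
    using rows by (intro norm_2inf_le[OF assms(2)]) (simp add: XtE_def less_imp_le)
qed

lemma gauss_matrix_good_event:
  fixes X :: "nat \<Rightarrow> nat \<Rightarrow> real" and n p q :: nat
  assumes "n \<ge> 1" "p \<ge> 1" "q \<ge> 1" and cols: "\<And>j. j < p \<Longrightarrow> (\<Sum>i<n. (X i j)\<^sup>2) = n"
    and \<sigma>: "\<sigma> > 0" and t: "t \<ge> 0"
  shows "measure (gauss_matrix n q \<sigma>)
           {E \<in> space (gauss_matrix n q \<sigma>).
              norm_2inf p q (XtE n X E) / (sqrt (real n * real q) * fro_norm n q E)
                \<le> sqrt 2 / sqrt (real n * real q) * (1 + t / sqrt q)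
            \<and> \<sigma> / sqrt 2 < fro_norm n q E / sqrt (real n * real q)
            \<and> fro_norm n q E / sqrt (real n * real q) < 2 * \<sigma>}
         \<ge> 1 - p * exp (- t\<^sup>2 / 2) - 2 * exp (- (real n * real q) / 24)"
    (is "measure ?M ?G \<ge> _")
proof -
  interpret prob_space ?M
    using \<sigma> by (rule prob_space_gauss_matrix)
  define small where "small = {E \<in> space ?M. fro_norm n q E / sqrt (real n * real q) \<le> \<sigma> / sqrt 2}"
  define large where "large = {E \<in> space ?M. 2 * \<sigma> \<le> fro_norm n q E / sqrt (real n * real q)}"
  define row_large where "row_large j = {E \<in> space ?M.
    \<sigma> * sqrt n * (sqrt q + t) \<le> sqrt (\<Sum>k<q. (\<Sum>i<n. X i j * E (i, k))\<^sup>2)}" for j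
  have events: "small \<in> events" "large \<in> events" "row_large j \<in> events" for j
    unfolding small_def large_def row_large_def by measurable
  have "E \<in> ?G" if "E \<in> space ?M" "E \<notin> small \<union> large \<union> (\<Union>j<p. row_large j)" for E
    using that XtE_ratio_le[OF assms(1-3) \<sigma>, of E X t] by (auto simp: small_def large_def row_large_def not_le)
  then have "space ?M - ?G \<subseteq> small \<union> large \<union> (\<Union>j<p. row_large j)"
    by blast
  then have "prob (space ?M - ?G) \<le> prob (small \<union> large \<union> (\<Union>j<p. row_large j))"
    using events by (intro finite_measure_mono) auto
  also have "\<dots> \<le> prob small + prob large + (\<Sum>j<p. prob (row_large j))"
    using events by (intro order.trans[OF measure_Un_le] add_mono measure_Un_le
        finite_measure_subadditive_finite) auto
  also have "\<dots> \<le> exp (- (real n * real q) / 24) + exp (- (real n * real q) / 24) + (\<Sum>j<p. exp (- t\<^sup>2 / 2))"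
    unfolding small_def large_def row_large_def
    using assms by (intro add_mono sum_mono prob_fro_norm_small prob_fro_norm_large prob_row_norm_large) auto
  finally have "prob (space ?M - ?G) \<le> p * exp (- t\<^sup>2 / 2) + 2 * exp (- (real n * real q) / 24)"
    by simp
  moreover have "?G \<in> events"
    by measurable
  ultimately show ?thesis
    using prob_compl by simp
qed

theorem lemma7:
  fixes X :: "nat \<Rightarrow> nat \<Rightarrow> real" and n p q :: nat and \<sigma> A lam :: real
  assumes "n \<ge> 1" "p \<ge> 1" "q \<ge> 1"
    and cols: "\<forall>j<p. sqrt (\<Sum>i<n. (X i j)\<^sup>2) = sqrt (real n)"
    and sigma: "\<sigma> > 0"
    and A: "A > sqrt 2"
    and lam_def: "lam = 2 * sqrt 2 / sqrt (real n * real q) * (1 + A * sqrt (ln (real p) / real q))"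
  shows "measure (gauss_matrix n q \<sigma>)
           {E \<in> space (gauss_matrix n q \<sigma>).
              norm_2inf p q (XtE n X E) / (sqrt (real n * real q) * fro_norm n q E) \<le> lam / 2
            \<and> \<sigma> / sqrt 2 < fro_norm n q E / sqrt (real n * real q)
            \<and> fro_norm n q E / sqrt (real n * real q) < 2 * \<sigma>}
         \<ge> 1 - real p powr (1 - A\<^sup>2 / 2) - (1 + exp 2) * exp (- (real n * real q) / 24)"
proof -
  define t where "t = A * sqrt (ln p)"
  have "A > 0"
    using A real_sqrt_ge_zero[of 2] by linarith
  then have "t \<ge> 0"
    using \<open>p \<ge> 1\<close> by (simp add: t_def)
  have lam: "lam / 2 = sqrt 2 / sqrt (real n * real q) * (1 + t / sqrt q)"
    by (simp add: lam_def t_def real_sqrt_divide)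
  have tail: "real p * exp (- t\<^sup>2 / 2) = real p powr (1 - A\<^sup>2 / 2)"
  proof -
    have "exp (- t\<^sup>2 / 2) = real p powr (- A\<^sup>2 / 2)"
      using \<open>p \<ge> 1\<close> by (simp add: t_def powr_def power_mult_distrib)
    moreover have "real p powr (1 - A\<^sup>2 / 2) = real p powr 1 * real p powr (- A\<^sup>2 / 2)"
      using powr_add[of "real p" 1 "- A\<^sup>2 / 2"] by simp
    ultimately show ?thesis
      using \<open>p \<ge> 1\<close> by simp
  qed
  have col_norms: "\<And>j. j < p \<Longrightarrow> (\<Sum>i<n. (X i j)\<^sup>2) = n"
    using cols by simp
  have "2 * exp (- (real n * real q) / 24) \<le> (1 + exp 2) * exp (- (real n * real q) / 24)"
    by (intro mult_right_mono) auto
  then show ?thesis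
    unfolding lam using gauss_matrix_good_event[where X = X, OF assms(1-3) col_norms sigma \<open>t \<ge> 0\<close>] tail
    by linarith
qed

end
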